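(* Let $f:\mathbb{R}^n\to\mathbb{R}$ be locally Lipschitz continuous and bounded below, let $x^0\in\mathbb{R}^n$ be such that the level set $\mathrm{lev}_{x^0}f=\{x\in\mathbb{R}^n : f(x)\le f(x^0)\}$ is bounded, and suppose $f$ is prox-regular at every point of $\mathrm{lev}_{x^0}f$. For $x\in\mathbb{R}^n$ and $a\ge 0$ let $g(y;x,a)=f(y)+\frac{a}{2}\|y-x\|_2^2$. Then there exists a number $\bar a\ge 0$ such that for every $a\ge \bar a$, every $x\in\mathbb{R}^n$ and every $y\in\mathrm{lev}_{x^0}f$, the function $g(\cdot;x,a)$ is convex on a neighborhood of $y$.
   Context: $\partial f(\bar x)$ denotes the basic (limiting) subdifferential: the set of limits of Fréchet subgradients $s_j\in\hat\partial f(x_j)$ with $x_j\to\bar x$, $f(x_j)\to f(\bar x)$, where $s\in\hat\partial f(x)$ means $\liminf_{x'\to x, x'\neq x}\frac{f(x')-f(x)-\langle s,x'-x\rangle}{\|x'-x\|}\ge 0$. A function $f$ is prox-regular at $\bar x$ for $\bar v\in\partial f(\bar x)$ if $f$ is finite and locally lower semicontinuous at $\bar x$ and there exist $\epsilon>0$ and $a\ge0$ such that $f(x')\ge f(x)+\langle v,x'-x\rangle-\frac a2\|x'-x\|^2$ for all $x'\in B(\bar x,\epsilon)$ whenever $\|x-\bar x\|<\epsilon$, $v\in\partial f(x)$, $\|v-\bar v\|<\epsilon$, $f(x)<f(\bar x)+\epsilon$; $f$ is prox-regular at $\bar x$ if this holds for every $\bar v\in\partial f(\bar x)$. *)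

theory Defs
  imports "HOL-Analysis.Analysis"
begin

text \<open>Frechet (regular) subgradient: liminf_{x' -> x, x' ~= x}
  (f x' - f x - <s, x' - x>) / |x' - x| >= 0, written out in epsilon-delta form.\<close>
definition frechet_subdiff :: "('a::euclidean_space \<Rightarrow> real) \<Rightarrow> 'a \<Rightarrow> 'a set" where
  "frechet_subdiff f x = {s. \<forall>\<epsilon>>0. \<exists>\<delta>>0. \<forall>x'. 0 < norm (x' - x) \<and> norm (x' - x) < \<delta> \<longrightarrow>
      (f x' - f x - inner s (x' - x)) / norm (x' - x) \<ge> - \<epsilon>}"

definition limiting_subdiff :: "('a::euclidean_space \<Rightarrow> real) \<Rightarrow> 'a \<Rightarrow> 'a set" where
  "limiting_subdiff f x = {v. \<exists>xs ss. (\<forall>j. ss j \<in> frechet_subdiff f (xs j)) \<and>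
      xs \<longlonglongrightarrow> x \<and> (\<lambda>j. f (xs j)) \<longlonglongrightarrow> f x \<and> ss \<longlonglongrightarrow> v}"

definition locally_lsc_at :: "('a::euclidean_space \<Rightarrow> real) \<Rightarrow> 'a \<Rightarrow> bool" where
  "locally_lsc_at f x \<longleftrightarrow> (\<exists>\<epsilon>>0. \<forall>z\<in>ball x \<epsilon>. \<forall>e>0. \<forall>\<^sub>F y in at z. f z - e < f y)"

definition prox_regular_at_for :: "('a::euclidean_space \<Rightarrow> real) \<Rightarrow> 'a \<Rightarrow> 'a \<Rightarrow> bool" where
  "prox_regular_at_for f xb vb \<longleftrightarrow> vb \<in> limiting_subdiff f xb \<and> locally_lsc_at f xb \<and>
     (\<exists>\<epsilon>>0. \<exists>a\<ge>0. \<forall>x v x'. norm (x - xb) < \<epsilon> \<and> v \<in> limiting_subdiff f x \<and> norm (v - vb) < \<epsilon>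
        \<and> f x < f xb + \<epsilon> \<and> x' \<in> ball xb \<epsilon> \<longrightarrow>
        f x' \<ge> f x + inner v (x' - x) - a / 2 * (norm (x' - x))\<^sup>2)"

definition prox_regular_at :: "('a::euclidean_space \<Rightarrow> real) \<Rightarrow> 'a \<Rightarrow> bool" where
  "prox_regular_at f xb \<longleftrightarrow> locally_lsc_at f xb \<and>
     (\<forall>vb\<in>limiting_subdiff f xb. prox_regular_at_for f xb vb)"

definition locally_lipschitz :: "('a::metric_space \<Rightarrow> real) \<Rightarrow> bool" where
  "locally_lipschitz f \<longleftrightarrow> (\<forall>x. \<exists>e>0. \<exists>L. L-lipschitz_on (ball x e) f)"

end

theory Submission
  imports Defs
begin

text \<open>Near a point y of the level set, prox-regularity at each subgradient vb of f at y gives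
  f x' \<ge> f x + \<langle>v, x' - x\<rangle> - A/2 |x' - x|^2 for x, x' near y and v \<in> \<partial>f x near vb. Since f is
  locally Lipschitz, \<partial>f y is nonempty and compact and \<partial>f is outer semicontinuous, so finitely many
  such vb account for all subgradients at all points of a small ball around y. This gives one
  constant A on that ball, and then f + a/2 |\<cdot> - x|^2 has an affine minorant at every point of the
  ball whenever a \<ge> A, hence is convex there. Compactness of the level set makes A uniform.\<close>

lemma power2_norm_diff_expand:
  fixes x y c :: "'a::real_inner"
  shows "(norm (y - c))\<^sup>2 = (norm (x - c))\<^sup>2 + 2 * inner (x - c) (y - x) + (norm (y - x))\<^sup>2"
  using dot_norm[of "x - c" "y - x"] by simp

lemma limiting_subdiff_iff_approx:
  "v \<in> limiting_subdiff f x \<longleftrightarrow>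
     (\<forall>e>0. \<exists>x' s. s \<in> frechet_subdiff f x' \<and> dist x' x < e \<and> dist (f x') (f x) < e \<and> dist s v < e)"
proof
  assume "v \<in> limiting_subdiff f x"
  then obtain xs ss where sub: "\<forall>j. ss j \<in> frechet_subdiff f (xs j)" and lim: "xs \<longlonglongrightarrow> x"
    "(\<lambda>j. f (xs j)) \<longlonglongrightarrow> f x" "ss \<longlonglongrightarrow> v"
    unfolding limiting_subdiff_def by blast
  show "\<forall>e>0. \<exists>x' s. s \<in> frechet_subdiff f x' \<and> dist x' x < e \<and> dist (f x') (f x) < e \<and> dist s v < e"
  proof (intro allI impI)
    fix e :: real assume "e > 0"
    then have "\<forall>\<^sub>F j in sequentially. dist (xs j) x < e \<and> dist (f (xs j)) (f x) < e \<and> dist (ss j) v < e"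
      using lim by (intro eventually_conj) (auto simp: tendsto_iff)
    then obtain j where "dist (xs j) x < e \<and> dist (f (xs j)) (f x) < e \<and> dist (ss j) v < e"
      using eventually_happens sequentially_bot by blast
    then show "\<exists>x' s. s \<in> frechet_subdiff f x' \<and> dist x' x < e \<and> dist (f x') (f x) < e \<and> dist s v < e"
      using sub by blast
  qed
next
  assume approx: "\<forall>e>0. \<exists>x' s. s \<in> frechet_subdiff f x' \<and> dist x' x < e \<and> dist (f x') (f x) < e \<and> dist s v < e"
  have "\<forall>n. \<exists>p. snd p \<in> frechet_subdiff f (fst p) \<and> dist (fst p) x < 1 / Suc n
      \<and> dist (f (fst p)) (f x) < 1 / Suc n \<and> dist (snd p) v < 1 / Suc n"
    using approx by simp
  then obtain p where p: "\<And>n. snd (p n) \<in> frechet_subdiff f (fst (p n)) \<and> dist (fst (p n)) x < 1 / Suc n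
      \<and> dist (f (fst (p n))) (f x) < 1 / Suc n \<and> dist (snd (p n)) v < 1 / Suc n"
    by metis
  have "(\<lambda>n. fst (p n)) \<longlonglongrightarrow> x" "(\<lambda>n. f (fst (p n))) \<longlonglongrightarrow> f x" "(\<lambda>n. snd (p n)) \<longlonglongrightarrow> v"
    by (rule tendsto_dist_iff[THEN iffD2], rule LIMSEQ_norm_0, use p in simp)+
  with p show "v \<in> limiting_subdiff f x"
    unfolding limiting_subdiff_def by (intro CollectI exI[of _ "\<lambda>n. fst (p n)"] exI[of _ "\<lambda>n. snd (p n)"]) blast
qed

lemma limiting_subdiff_closed_graph:
  assumes sub: "\<And>n. vs n \<in> limiting_subdiff f (xs n)"
    and lim: "xs \<longlonglongrightarrow> x" "(\<lambda>n. f (xs n)) \<longlonglongrightarrow> f x" "vs \<longlonglongrightarrow> v"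
  shows "v \<in> limiting_subdiff f x"
  unfolding limiting_subdiff_iff_approx
proof (intro allI impI)
  fix e :: real assume "e > 0"
  then have "e/2 > 0" by simp
  then have "\<forall>\<^sub>F n in sequentially. dist (xs n) x < e/2 \<and> dist (f (xs n)) (f x) < e/2 \<and> dist (vs n) v < e/2"
    using lim[unfolded tendsto_iff] by (intro eventually_conj) blast+
  then obtain n where n: "dist (xs n) x < e/2" "dist (f (xs n)) (f x) < e/2" "dist (vs n) v < e/2"
    using eventually_happens sequentially_bot by blast
  obtain x' s where s: "s \<in> frechet_subdiff f x'" "dist x' (xs n) < e/2"
      "dist (f x') (f (xs n)) < e/2" "dist s (vs n) < e/2"
    using sub[of n] \<open>e/2 > 0\<close> unfolding limiting_subdiff_iff_approx by blast
  have "dist x' x < e" "dist (f x') (f x) < e" "dist s v < e"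
    using n s dist_triangle_half_l[of _ _ e] by (metis dist_commute)+
  with s(1) show "\<exists>x' s. s \<in> frechet_subdiff f x' \<and> dist x' x < e \<and> dist (f x') (f x) < e \<and> dist s v < e"
    by blast
qed

lemma closed_limiting_subdiff: "closed (limiting_subdiff f x)"
  unfolding closed_sequential_limits
  using limiting_subdiff_closed_graph[where xs = "\<lambda>_. x"] by blast

lemma frechet_subdiff_norm_le_lipschitz:
  assumes s: "s \<in> frechet_subdiff f z" and lip: "L-lipschitz_on S f" and "open S" "z \<in> S"
  shows "norm s \<le> L"
proof (rule ccontr)
  assume "\<not> norm s \<le> L"
  then have gap: "norm s - L > 0" and half_gap: "(norm s - L) / 2 > 0" by simp_all
  have "s \<noteq> 0" using gap lipschitz_on_nonneg[OF lip] by auto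
  obtain \<rho> where "\<rho> > 0" "ball z \<rho> \<subseteq> S" using \<open>open S\<close> \<open>z \<in> S\<close> openE by blast
  obtain \<delta> where "\<delta> > 0" and \<delta>: "\<And>x'. 0 < norm (x' - z) \<Longrightarrow> norm (x' - z) < \<delta> \<Longrightarrow>
      (f x' - f z - inner s (x' - z)) / norm (x' - z) \<ge> - ((norm s - L) / 2)"
    using s half_gap unfolding frechet_subdiff_def by blast
  define t where "t = min (\<delta>/2) (\<rho>/2)"
  have t: "t > 0" "t < \<delta>" "t < \<rho>" using \<open>\<delta> > 0\<close> \<open>\<rho> > 0\<close> by (auto simp: t_def)
  define x' where "x' = z + (t / norm s) *\<^sub>R s"
  have nx: "norm (x' - z) = t" using t \<open>s \<noteq> 0\<close> by (simp add: x'_def)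
  have ip: "inner s (x' - z) = t * norm s"
    using \<open>s \<noteq> 0\<close> by (simp add: x'_def power2_norm_eq_inner[symmetric] power2_eq_square)
  have "f x' - f z - t * norm s \<ge> - ((norm s - L) / 2) * t"
    using \<delta>[of x'] nx t ip by (simp add: field_simps)
  moreover have "x' \<in> S"
    using nx t \<open>ball z \<rho> \<subseteq> S\<close> by (auto simp: dist_norm norm_minus_commute)
  then have "f x' - f z \<le> L * t"
    using lipschitz_on_normD[OF lip _ \<open>z \<in> S\<close>, of x'] nx by simp
  ultimately have "(norm s - L) * t \<le> 0"
    by (simp add: algebra_simps) argo
  then show False using gap t(1) by (simp add: mult_le_0_iff)
qed

lemma limiting_subdiff_norm_le_lipschitz:
  assumes lip: "L-lipschitz_on S f" and "open S" "x \<in> S" and v: "v \<in> limiting_subdiff f x"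
  shows "norm v \<le> L"
proof -
  obtain xs ss where sub: "\<forall>j. ss j \<in> frechet_subdiff f (xs j)" and "xs \<longlonglongrightarrow> x" "ss \<longlonglongrightarrow> v"
    using v unfolding limiting_subdiff_def by blast
  have "\<forall>\<^sub>F j in sequentially. xs j \<in> S"
    using topological_tendstoD[OF \<open>xs \<longlonglongrightarrow> x\<close> \<open>open S\<close> \<open>x \<in> S\<close>] .
  then have "\<forall>\<^sub>F j in sequentially. norm (ss j) \<le> L"
    by eventually_elim (use sub frechet_subdiff_norm_le_lipschitz[OF _ lip \<open>open S\<close>] in blast)
  then show ?thesis
    using tendsto_upperbound[OF tendsto_norm[OF \<open>ss \<longlonglongrightarrow> v\<close>]] by simp
qed

lemma compact_limiting_subdiff:
  assumes "L-lipschitz_on S f" "open S" "x \<in> S"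
  shows "compact (limiting_subdiff f x)"
proof -
  have "limiting_subdiff f x \<subseteq> cball 0 L"
    using limiting_subdiff_norm_le_lipschitz[OF assms] by auto
  then show ?thesis
    using closed_limiting_subdiff bounded_subset[OF bounded_cball] compact_eq_bounded_closed by blast
qed

lemma frechet_subdiff_at_proximal_minimizer:
  assumes "k > 0" "\<delta> > 0"
    and min: "\<And>y. y \<in> ball z \<delta> \<Longrightarrow> f z + k * (norm (z - x))\<^sup>2 \<le> f y + k * (norm (y - x))\<^sup>2"
  shows "- (2 * k) *\<^sub>R (z - x) \<in> frechet_subdiff f z"
  unfolding frechet_subdiff_def
proof (intro CollectI allI impI)
  fix \<epsilon> :: real assume "\<epsilon> > 0"
  show "\<exists>\<delta>'>0. \<forall>y. 0 < norm (y - z) \<and> norm (y - z) < \<delta>' \<longrightarrow>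
      - \<epsilon> \<le> (f y - f z - inner (- (2 * k) *\<^sub>R (z - x)) (y - z)) / norm (y - z)"
  proof (intro exI[of _ "min \<delta> (\<epsilon> / k)"] conjI allI impI)
    show "min \<delta> (\<epsilon> / k) > 0" using assms \<open>\<epsilon> > 0\<close> by simp
    fix y assume y: "0 < norm (y - z) \<and> norm (y - z) < min \<delta> (\<epsilon> / k)"
    then have "y \<in> ball z \<delta>" by (simp add: dist_norm norm_minus_commute)
    then have "f y - f z + 2 * k * inner (z - x) (y - z) \<ge> - k * (norm (y - z))\<^sup>2"
      using min[of y] power2_norm_diff_expand[of y x z] by (simp add: algebra_simps)
    moreover have "k * norm (y - z) \<le> \<epsilon>" using y \<open>k > 0\<close> by (simp add: field_simps)
    then have "k * (norm (y - z))\<^sup>2 \<le> \<epsilon> * norm (y - z)"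
      by (simp add: power2_eq_square mult.assoc[symmetric] mult_right_mono)
    ultimately have "- \<epsilon> * norm (y - z) \<le> f y - f z - inner (- (2 * k) *\<^sub>R (z - x)) (y - z)"
      by simp
    then show "- \<epsilon> \<le> (f y - f z - inner (- (2 * k) *\<^sub>R (z - x)) (y - z)) / norm (y - z)"
      using y by (simp add: le_divide_eq)
  qed
qed

lemma exists_bounded_frechet_subgradient_near:
  assumes lip: "L-lipschitz_on (ball x r) f" and "k > 0" and kr: "2 * L < k * r"
  shows "\<exists>z s. s \<in> frechet_subdiff f z \<and> norm (z - x) \<le> L / k \<and> norm s \<le> 2 * L"
proof -
  have "L \<ge> 0" using lip lipschitz_on_nonneg by blast
  then have "k * r > 0" using kr by linarith
  then have "r > 0" using \<open>k > 0\<close> by (simp add: zero_less_mult_iff)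
  define C where "C = cball x (r/2)"
  have "C \<subseteq> ball x r" using \<open>r > 0\<close> by (auto simp: C_def)
  then have "continuous_on C f"
    using continuous_on_subset[OF lipschitz_on_continuous_on[OF lip]] by blast
  then have "continuous_on C (\<lambda>z. f z + k * (norm (z - x))\<^sup>2)"
    by (intro continuous_intros)
  moreover have "compact C" "C \<noteq> {}" using \<open>r > 0\<close> by (auto simp: C_def)
  ultimately obtain z where "z \<in> C"
    and zmin: "\<And>y. y \<in> C \<Longrightarrow> f z + k * (norm (z - x))\<^sup>2 \<le> f y + k * (norm (y - x))\<^sup>2"
    using continuous_attains_inf[of C "\<lambda>z. f z + k * (norm (z - x))\<^sup>2"] by blast
  have "x \<in> C" using \<open>r > 0\<close> by (simp add: C_def)
  have xz: "x \<in> ball x r" "z \<in> ball x r" using \<open>x \<in> C\<close> \<open>z \<in> C\<close> \<open>C \<subseteq> ball x r\<close> by auto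
  have "k * (norm (z - x))\<^sup>2 \<le> f x - f z" using zmin[OF \<open>x \<in> C\<close>] by simp
  also have "\<dots> \<le> L * norm (z - x)"
    using lipschitz_on_normD[OF lip xz] by (simp add: norm_minus_commute abs_le_iff)
  finally have "(k * norm (z - x)) * norm (z - x) \<le> L * norm (z - x)"
    by (simp add: power2_eq_square mult.assoc)
  then have "k * norm (z - x) \<le> L"
    using \<open>L \<ge> 0\<close> by (cases "z = x") (auto intro: mult_right_le_imp_le)
  then have zx: "norm (z - x) \<le> L / k" using \<open>k > 0\<close> by (simp add: field_simps)
  have "L / k < r / 2" using kr \<open>k > 0\<close> by (simp add: field_simps)
  then have "r/2 - norm (z - x) > 0" using zx by linarith
  have "ball z (r/2 - norm (z - x)) \<subseteq> C"
  proof
    fix y assume "y \<in> ball z (r/2 - norm (z - x))"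
    then have "dist z y < r/2 - dist x z" by (simp add: dist_norm norm_minus_commute)
    then show "y \<in> C" using dist_triangle[of x y z] by (simp add: C_def)
  qed
  then have "- (2 * k) *\<^sub>R (z - x) \<in> frechet_subdiff f z"
    using frechet_subdiff_at_proximal_minimizer[OF \<open>k > 0\<close> \<open>r/2 - norm (z - x) > 0\<close>] zmin
    by blast
  moreover have "norm (- (2 * k) *\<^sub>R (z - x)) = 2 * (k * norm (z - x))"
    using \<open>k > 0\<close> by simp
  then have "norm (- (2 * k) *\<^sub>R (z - x)) \<le> 2 * L"
    using \<open>k * norm (z - x) \<le> L\<close> by linarith
  ultimately show ?thesis using zx by blast
qed

lemma limiting_subdiff_nonempty:
  assumes lip: "L-lipschitz_on S f" and "open S" "x \<in> S"
  shows "limiting_subdiff f x \<noteq> {}"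
proof -
  obtain r where "r > 0" "ball x r \<subseteq> S" using \<open>open S\<close> \<open>x \<in> S\<close> openE by blast
  then have lip_ball: "L-lipschitz_on (ball x r) f" using lipschitz_on_subset[OF lip] by blast
  have "L \<ge> 0" using lip lipschitz_on_nonneg by blast
  define c where "c = 2 * (L + 1) / r"
  have "c > 0" using \<open>L \<ge> 0\<close> \<open>r > 0\<close> by (simp add: c_def)
  have "2 * L < (c * Suc n) * r" for n :: nat
  proof -
    have "2 * L < 2 * (L + 1)" by simp
    also have "\<dots> \<le> 2 * (L + 1) * Suc n" using \<open>L \<ge> 0\<close> by simp
    also have "\<dots> = (c * Suc n) * r" using \<open>r > 0\<close> by (simp add: c_def)
    finally show ?thesis .
  qed
  then have "\<forall>n. \<exists>z s. s \<in> frechet_subdiff f z \<and> norm (z - x) \<le> L / (c * Suc n) \<and> norm s \<le> 2 * L"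
    using exists_bounded_frechet_subgradient_near[OF lip_ball] \<open>c > 0\<close> by simp
  then obtain zs ss where zs: "\<And>n. ss n \<in> frechet_subdiff f (zs n)"
      "\<And>n. norm (zs n - x) \<le> L / (c * Suc n)" "\<And>n. norm (ss n) \<le> 2 * L"
    by metis
  have "(\<lambda>n. zs n - x) \<longlonglongrightarrow> 0"
  proof (rule Lim_null_comparison)
    have "L / (c * Suc n) = (L / c) * inverse (Suc n)" for n
      by (simp add: divide_inverse)
    then show "\<forall>\<^sub>F n in sequentially. norm (zs n - x) \<le> (L / c) * inverse (Suc n)"
      using zs(2) by simp
    show "(\<lambda>n. (L / c) * inverse (Suc n)) \<longlonglongrightarrow> 0"
      using tendsto_mult_right_zero[OF LIMSEQ_inverse_real_of_nat] .
  qed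
  then have "zs \<longlonglongrightarrow> x" by (rule LIM_zero_cancel)
  have "ss n \<in> cball 0 (2 * L)" for n using zs(3) by simp
  then obtain l \<sigma> where \<sigma>: "strict_mono \<sigma>" "(ss \<circ> \<sigma>) \<longlonglongrightarrow> l"
    using seq_compactE[OF compact_imp_seq_compact[OF compact_cball]] by metis
  have "isCont f x"
    using lipschitz_on_continuous_on[OF lip] \<open>open S\<close> \<open>x \<in> S\<close> continuous_on_eq_continuous_at by blast
  have "(zs \<circ> \<sigma>) \<longlonglongrightarrow> x" using LIMSEQ_subseq_LIMSEQ[OF \<open>zs \<longlonglongrightarrow> x\<close> \<sigma>(1)] .
  then have "(\<lambda>n. f ((zs \<circ> \<sigma>) n)) \<longlonglongrightarrow> f x" by (rule isCont_tendsto_compose[OF \<open>isCont f x\<close>])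
  with \<open>(zs \<circ> \<sigma>) \<longlonglongrightarrow> x\<close> \<sigma>(2) zs(1) have "l \<in> limiting_subdiff f x"
    unfolding limiting_subdiff_def by (intro CollectI exI[of _ "zs \<circ> \<sigma>"] exI[of _ "ss \<circ> \<sigma>"]) auto
  then show ?thesis by blast
qed

lemma limiting_subdiff_outer_semicontinuous:
  assumes lip: "L-lipschitz_on S f" and "open S" "y \<in> S"
    and "open U" "limiting_subdiff f y \<subseteq> U"
  shows "\<exists>\<delta>>0. \<forall>x\<in>ball y \<delta>. limiting_subdiff f x \<subseteq> U"
proof (rule ccontr)
  assume "\<not> (\<exists>\<delta>>0. \<forall>x\<in>ball y \<delta>. limiting_subdiff f x \<subseteq> U)"
  then have neg: "\<exists>x\<in>ball y \<delta>. \<exists>v\<in>limiting_subdiff f x. v \<notin> U" if "\<delta> > 0" for \<delta>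
    using that by blast
  obtain r where "r > 0" "ball y r \<subseteq> S" using \<open>open S\<close> \<open>y \<in> S\<close> openE by blast
  have "\<exists>x v. x \<in> ball y (min r (1 / Suc n)) \<and> v \<in> limiting_subdiff f x \<and> v \<notin> U" for n :: nat
  proof -
    have "min r (1 / Suc n) > 0" using \<open>r > 0\<close> by simp
    then show ?thesis using neg by blast
  qed
  then obtain xs vs where xs: "\<And>n. xs n \<in> ball y (min r (1 / Suc n))"
    and vs: "\<And>n. vs n \<in> limiting_subdiff f (xs n)" "\<And>n. vs n \<notin> U"
    by metis
  have "xs n \<in> S" for n using xs[of n] \<open>ball y r \<subseteq> S\<close> by auto
  have "dist (xs n) y < 1 / Suc n" for n using xs[of n] by (simp add: dist_commute)
  then have "(\<lambda>n. dist (xs n) y) \<longlonglongrightarrow> 0" by (intro LIMSEQ_norm_0) simp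
  then have "xs \<longlonglongrightarrow> y" using tendsto_dist_iff by blast
  have "vs n \<in> cball 0 L" for n
    using limiting_subdiff_norm_le_lipschitz[OF lip \<open>open S\<close> \<open>xs n \<in> S\<close> vs(1)] by simp
  then obtain l \<sigma> where \<sigma>: "strict_mono \<sigma>" "(vs \<circ> \<sigma>) \<longlonglongrightarrow> l"
    using seq_compactE[OF compact_imp_seq_compact[OF compact_cball]] by metis
  have "isCont f y"
    using lipschitz_on_continuous_on[OF lip] \<open>open S\<close> \<open>y \<in> S\<close> continuous_on_eq_continuous_at by blast
  have xs\<sigma>: "(xs \<circ> \<sigma>) \<longlonglongrightarrow> y" using LIMSEQ_subseq_LIMSEQ[OF \<open>xs \<longlonglongrightarrow> y\<close> \<sigma>(1)] .
  have "(vs \<circ> \<sigma>) n \<in> limiting_subdiff f ((xs \<circ> \<sigma>) n)" for n using vs(1) by simp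
  then have "l \<in> limiting_subdiff f y"
    using xs\<sigma> isCont_tendsto_compose[OF \<open>isCont f y\<close> xs\<sigma>] \<sigma>(2)
    by (rule limiting_subdiff_closed_graph)
  moreover have "closed (- U)" using \<open>open U\<close> by (rule closed_Compl)
  then have "l \<in> - U" by (rule closed_sequentially[OF _ _ \<sigma>(2)]) (use vs(2) in simp)
  ultimately show False using \<open>limiting_subdiff f y \<subseteq> U\<close> by blast
qed

lemma convex_on_if_affine_minorants:
  fixes h :: "'a::real_inner \<Rightarrow> real"
  assumes "convex S" and minorant: "\<And>z. z \<in> S \<Longrightarrow> \<exists>w. \<forall>x\<in>S. h z + inner w (x - z) \<le> h x"
  shows "convex_on S h"
proof (rule convex_onI[OF _ \<open>convex S\<close>])
  fix t :: real and x y assume t: "0 < t" "t < 1" and "x \<in> S" "y \<in> S"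
  define z where "z = (1 - t) *\<^sub>R x + t *\<^sub>R y"
  have "z \<in> S" using \<open>convex S\<close> \<open>x \<in> S\<close> \<open>y \<in> S\<close> t by (simp add: z_def convex_alt)
  then obtain w where w: "\<And>x. x \<in> S \<Longrightarrow> h z + inner w (x - z) \<le> h x" using minorant by blast
  have "(1 - t) * inner w (x - z) + t * inner w (y - z) = 0"
    by (simp add: z_def inner_diff_right inner_add_right algebra_simps)
  then have "h z = (1 - t) * (h z + inner w (x - z)) + t * (h z + inner w (y - z))"
    by (simp add: algebra_simps)
  also have "\<dots> \<le> (1 - t) * h x + t * h y"
    using w[OF \<open>x \<in> S\<close>] w[OF \<open>y \<in> S\<close>] t by (intro add_mono mult_left_mono) simp_all
  finally show "h ((1 - t) *\<^sub>R x + t *\<^sub>R y) \<le> (1 - t) * h x + t * h y"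
    by (simp add: z_def)
qed

definition lower_quadratic_support_on :: "'a set \<Rightarrow> real \<Rightarrow> ('a::real_inner \<Rightarrow> real) \<Rightarrow> bool" where
  "lower_quadratic_support_on S A f \<longleftrightarrow>
     (\<forall>x\<in>S. \<exists>v. \<forall>y\<in>S. f x + inner v (y - x) - A / 2 * (norm (y - x))\<^sup>2 \<le> f y)"

lemma lower_quadratic_support_on_mono:
  assumes "lower_quadratic_support_on S A f" "T \<subseteq> S" "A \<le> B"
  shows "lower_quadratic_support_on T B f"
  unfolding lower_quadratic_support_on_def
proof
  fix x assume "x \<in> T"
  then obtain v where v: "\<And>y. y \<in> S \<Longrightarrow> f x + inner v (y - x) - A / 2 * (norm (y - x))\<^sup>2 \<le> f y"
    using assms(1,2) unfolding lower_quadratic_support_on_def by blast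
  have "f x + inner v (y - x) - B / 2 * (norm (y - x))\<^sup>2 \<le> f y" if "y \<in> T" for y
  proof -
    have "A / 2 * (norm (y - x))\<^sup>2 \<le> B / 2 * (norm (y - x))\<^sup>2"
      using \<open>A \<le> B\<close> by (simp add: mult_right_mono)
    moreover have "y \<in> S" using that \<open>T \<subseteq> S\<close> by blast
    ultimately show ?thesis using v[of y] by linarith
  qed
  then show "\<exists>v. \<forall>y\<in>T. f x + inner v (y - x) - B / 2 * (norm (y - x))\<^sup>2 \<le> f y"
    by blast
qed

lemma convex_on_add_quadratic_if_lower_quadratic_support:
  assumes "convex S" "lower_quadratic_support_on S A f" "A \<le> a"
  shows "convex_on S (\<lambda>z. f z + a / 2 * (norm (z - c))\<^sup>2)"
proof (rule convex_on_if_affine_minorants[OF \<open>convex S\<close>])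
  fix z assume "z \<in> S"
  then obtain v where v: "\<And>x. x \<in> S \<Longrightarrow> f z + inner v (x - z) - a / 2 * (norm (x - z))\<^sup>2 \<le> f x"
    using lower_quadratic_support_on_mono[OF assms(2) order_refl \<open>A \<le> a\<close>]
    unfolding lower_quadratic_support_on_def by blast
  have "f z + a / 2 * (norm (z - c))\<^sup>2 + inner (v + a *\<^sub>R (z - c)) (x - z) \<le> f x + a / 2 * (norm (x - c))\<^sup>2"
    if "x \<in> S" for x
  proof -
    have "a / 2 * (norm (x - c))\<^sup>2
        = a / 2 * (norm (z - c))\<^sup>2 + a * inner (z - c) (x - z) + a / 2 * (norm (x - z))\<^sup>2"
      using arg_cong[OF power2_norm_diff_expand[of x c z], of "\<lambda>t. a / 2 * t"]
      by (simp add: field_simps del: inner_diff_left inner_diff_right)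
    moreover have "inner (v + a *\<^sub>R (z - c)) (x - z) = inner v (x - z) + a * inner (z - c) (x - z)"
      by (simp add: inner_add_left)
    ultimately show ?thesis using v[OF that] by linarith
  qed
  then show "\<exists>w. \<forall>x\<in>S. f z + a / 2 * (norm (z - c))\<^sup>2 + inner w (x - z) \<le> f x + a / 2 * (norm (x - c))\<^sup>2"
    by blast
qed

definition prox_regular_bound :: "('a::euclidean_space \<Rightarrow> real) \<Rightarrow> 'a \<Rightarrow> 'a \<Rightarrow> real \<Rightarrow> real \<Rightarrow> bool" where
  "prox_regular_bound f y vb \<epsilon> A \<longleftrightarrow> (\<forall>x\<in>ball y \<epsilon>. \<forall>v\<in>limiting_subdiff f x. dist v vb < \<epsilon> \<longrightarrow>
     (\<forall>x'\<in>ball y \<epsilon>. f x + inner v (x' - x) - A / 2 * (norm (x' - x))\<^sup>2 \<le> f x'))"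

lemma prox_regular_at_for_imp_bound:
  assumes "prox_regular_at_for f y vb" "isCont f y"
  shows "\<exists>\<epsilon>>0. \<exists>A. prox_regular_bound f y vb \<epsilon> A"
proof -
  obtain \<epsilon> A where "\<epsilon> > 0" and prox: "\<And>x v x'. norm (x - y) < \<epsilon> \<Longrightarrow> v \<in> limiting_subdiff f x \<Longrightarrow>
      norm (v - vb) < \<epsilon> \<Longrightarrow> f x < f y + \<epsilon> \<Longrightarrow> x' \<in> ball y \<epsilon> \<Longrightarrow>
      f x' \<ge> f x + inner v (x' - x) - A / 2 * (norm (x' - x))\<^sup>2"
    using assms(1) unfolding prox_regular_at_for_def by blast
  \<comment> \<open>Continuity of f makes the localisation f x < f y + \<epsilon> automatic near y.\<close>
  obtain \<delta> where "\<delta> > 0" and \<delta>: "\<And>x. dist x y < \<delta> \<Longrightarrow> dist (f x) (f y) < \<epsilon>"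
    using assms(2) \<open>\<epsilon> > 0\<close> unfolding continuous_at_eps_delta by blast
  have "prox_regular_bound f y vb (min \<epsilon> \<delta>) A"
    unfolding prox_regular_bound_def
  proof (intro ballI impI)
    fix x v x' assume x: "x \<in> ball y (min \<epsilon> \<delta>)" and v: "v \<in> limiting_subdiff f x" "dist v vb < min \<epsilon> \<delta>"
      and x': "x' \<in> ball y (min \<epsilon> \<delta>)"
    have "f x < f y + \<epsilon>" using \<delta>[of x] x by (simp add: dist_commute dist_real_def)
    moreover have "norm (x - y) < \<epsilon>" "norm (v - vb) < \<epsilon>" "x' \<in> ball y \<epsilon>"
      using x v(2) x' by (auto simp: dist_norm norm_minus_commute)
    ultimately show "f x + inner v (x' - x) - A / 2 * (norm (x' - x))\<^sup>2 \<le> f x'"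
      using prox v(1) by blast
  qed
  then show ?thesis using \<open>\<epsilon> > 0\<close> \<open>\<delta> > 0\<close> by (metis min_less_iff_conj)
qed

lemma lower_quadratic_support_on_ball_if_prox_regular_bounds:
  assumes nonempty: "\<And>x. x \<in> ball y \<delta> \<Longrightarrow> limiting_subdiff f x \<noteq> {}"
    and bounds: "\<And>x v. x \<in> ball y \<delta> \<Longrightarrow> v \<in> limiting_subdiff f x \<Longrightarrow>
      \<exists>vb \<epsilon> a. prox_regular_bound f y vb \<epsilon> a \<and> dist v vb < \<epsilon> \<and> \<delta> \<le> \<epsilon> \<and> a \<le> A"
  shows "lower_quadratic_support_on (ball y \<delta>) A f"
  unfolding lower_quadratic_support_on_def
proof
  fix x assume x: "x \<in> ball y \<delta>"
  obtain v where v: "v \<in> limiting_subdiff f x" using nonempty[OF x] by blast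
  then obtain vb \<epsilon> a where bound: "prox_regular_bound f y vb \<epsilon> a"
    and "dist v vb < \<epsilon>" "\<delta> \<le> \<epsilon>" "a \<le> A"
    using bounds[OF x] by blast
  have "f x + inner v (x' - x) - A / 2 * (norm (x' - x))\<^sup>2 \<le> f x'" if "x' \<in> ball y \<delta>" for x'
  proof -
    have "a / 2 * (norm (x' - x))\<^sup>2 \<le> A / 2 * (norm (x' - x))\<^sup>2"
      using \<open>a \<le> A\<close> by (simp add: mult_right_mono)
    moreover have "x \<in> ball y \<epsilon>" "x' \<in> ball y \<epsilon>" using x that \<open>\<delta> \<le> \<epsilon>\<close> by auto
    ultimately show ?thesis
      using bound v \<open>dist v vb < \<epsilon>\<close> unfolding prox_regular_bound_def by fastforce
  qed
  then show "\<exists>v. \<forall>x'\<in>ball y \<delta>. f x + inner v (x' - x) - A / 2 * (norm (x' - x))\<^sup>2 \<le> f x'"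
    by blast
qed

lemma prox_regular_at_imp_lower_quadratic_support:
  assumes lip: "L-lipschitz_on S f" and "open S" "y \<in> S" and prox: "prox_regular_at f y"
  shows "\<exists>\<delta>>0. \<exists>A. lower_quadratic_support_on (ball y \<delta>) A f"
proof -
  have "isCont f y"
    using lipschitz_on_continuous_on[OF lip] \<open>open S\<close> \<open>y \<in> S\<close> continuous_on_eq_continuous_at by blast
  then have "\<forall>vb\<in>limiting_subdiff f y. \<exists>\<epsilon>>0. \<exists>A. prox_regular_bound f y vb \<epsilon> A"
    using prox prox_regular_at_for_imp_bound unfolding prox_regular_at_def by blast
  then obtain \<epsilon> a where \<epsilon>a: "\<And>vb. vb \<in> limiting_subdiff f y \<Longrightarrow> \<epsilon> vb > 0 \<and> prox_regular_bound f y vb (\<epsilon> vb) (a vb)"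
    by metis
  \<comment> \<open>The subgradients at y form a compact set, so finitely many of the prox-regularity
    neighbourhoods suffice; outer semicontinuity keeps the subgradients at nearby points inside them.\<close>
  have "limiting_subdiff f y \<subseteq> (\<Union>vb\<in>limiting_subdiff f y. ball vb (\<epsilon> vb))"
    using \<epsilon>a by force
  then obtain D where "D \<subseteq> limiting_subdiff f y" "finite D"
    and cover: "limiting_subdiff f y \<subseteq> (\<Union>vb\<in>D. ball vb (\<epsilon> vb))"
    by (rule compactE_image[OF compact_limiting_subdiff[OF lip \<open>open S\<close> \<open>y \<in> S\<close>] open_ball])
  obtain \<delta>\<^sub>0 where "\<delta>\<^sub>0 > 0" and \<delta>\<^sub>0: "\<And>x. x \<in> ball y \<delta>\<^sub>0 \<Longrightarrow> limiting_subdiff f x \<subseteq> (\<Union>vb\<in>D. ball vb (\<epsilon> vb))"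
    using limiting_subdiff_outer_semicontinuous[OF lip \<open>open S\<close> \<open>y \<in> S\<close> _ cover] by blast
  obtain r where "r > 0" "ball y r \<subseteq> S" using \<open>open S\<close> \<open>y \<in> S\<close> openE by blast
  define \<delta> where "\<delta> = Min (insert \<delta>\<^sub>0 (insert r (\<epsilon> ` D)))"
  define A where "A = Max (insert 0 (a ` D))"
  have "\<delta> > 0" using \<open>\<delta>\<^sub>0 > 0\<close> \<open>r > 0\<close> \<epsilon>a \<open>D \<subseteq> limiting_subdiff f y\<close> \<open>finite D\<close>
    by (auto simp: \<delta>_def Min_gr_iff)
  have "\<delta> \<le> \<delta>\<^sub>0" "\<delta> \<le> r" and \<delta>_le: "\<And>vb. vb \<in> D \<Longrightarrow> \<delta> \<le> \<epsilon> vb"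
    using Min_le[of "insert \<delta>\<^sub>0 (insert r (\<epsilon> ` D))"] \<open>finite D\<close> by (auto simp: \<delta>_def)
  have a_le: "\<And>vb. vb \<in> D \<Longrightarrow> a vb \<le> A"
    using \<open>finite D\<close> by (simp add: A_def)
  have "lower_quadratic_support_on (ball y \<delta>) A f"
  proof (rule lower_quadratic_support_on_ball_if_prox_regular_bounds)
    show "limiting_subdiff f x \<noteq> {}" if "x \<in> ball y \<delta>" for x
    proof (rule limiting_subdiff_nonempty[OF lip \<open>open S\<close>])
      show "x \<in> S" using that \<open>\<delta> \<le> r\<close> \<open>ball y r \<subseteq> S\<close> by auto
    qed
    show "\<exists>vb \<epsilon>' a'. prox_regular_bound f y vb \<epsilon>' a' \<and> dist v vb < \<epsilon>' \<and> \<delta> \<le> \<epsilon>' \<and> a' \<le> A"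
      if x: "x \<in> ball y \<delta>" and v: "v \<in> limiting_subdiff f x" for x v
    proof -
      obtain vb where "vb \<in> D" "dist v vb < \<epsilon> vb"
        using \<delta>\<^sub>0 x v \<open>\<delta> \<le> \<delta>\<^sub>0\<close> by (force simp: dist_commute)
      then show ?thesis using \<epsilon>a \<open>D \<subseteq> limiting_subdiff f y\<close> \<delta>_le a_le by blast
    qed
  qed
  then show ?thesis using \<open>\<delta> > 0\<close> by blast
qed

lemma compact_imp_uniform_lower_quadratic_support:
  assumes "compact K" and local: "\<And>y. y \<in> K \<Longrightarrow> \<exists>\<delta>>0. \<exists>A. lower_quadratic_support_on (ball y \<delta>) A f"
  shows "\<exists>A. \<forall>y\<in>K. \<exists>\<delta>>0. lower_quadratic_support_on (ball y \<delta>) A f"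
proof -
  obtain \<delta> a where \<delta>a: "\<And>y. y \<in> K \<Longrightarrow> \<delta> y > 0 \<and> lower_quadratic_support_on (ball y (\<delta> y)) (a y) f"
    using local by metis
  then have "K \<subseteq> (\<Union>y\<in>K. ball y (\<delta> y))" by force
  then obtain C where "C \<subseteq> K" "finite C" and cover: "K \<subseteq> (\<Union>y\<in>C. ball y (\<delta> y))"
    by (rule compactE_image[OF \<open>compact K\<close> open_ball])
  define A where "A = Max (insert 0 (a ` C))"
  have "\<exists>e>0. lower_quadratic_support_on (ball y e) A f" if y: "y \<in> K" for y
  proof -
    obtain c where "c \<in> C" "y \<in> ball c (\<delta> c)" using cover y by blast
    define e where "e = \<delta> c - dist c y"
    have "e > 0" using \<open>y \<in> ball c (\<delta> c)\<close> by (simp add: e_def)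
    moreover have "ball y e \<subseteq> ball c (\<delta> c)"
    proof
      fix z assume "z \<in> ball y e"
      then show "z \<in> ball c (\<delta> c)" using dist_triangle[of c z y] by (simp add: e_def)
    qed
    moreover have "a c \<le> A" using \<open>c \<in> C\<close> \<open>finite C\<close> by (simp add: A_def)
    ultimately show ?thesis
      using lower_quadratic_support_on_mono \<delta>a \<open>c \<in> C\<close> \<open>C \<subseteq> K\<close> by blast
  qed
  then show ?thesis by blast
qed

lemma continuous_on_if_locally_lipschitz:
  fixes f :: "'a::metric_space \<Rightarrow> real"
  assumes "locally_lipschitz f"
  shows "continuous_on S f"
proof (intro continuous_at_imp_continuous_on ballI)
  fix x
  obtain e L where "e > 0" "L-lipschitz_on (ball x e) f"
    using assms unfolding locally_lipschitz_def by blast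
  then show "isCont f x"
    using lipschitz_on_continuous_on continuous_on_eq_continuous_at[OF open_ball] centre_in_ball by blast
qed

theorem lemma1:
  fixes f :: "'a::euclidean_space \<Rightarrow> real" and x0 :: 'a
  assumes "locally_lipschitz f"
    and "bdd_below (range f)"
    and "bounded {x. f x \<le> f x0}"
    and "\<forall>y\<in>{x. f x \<le> f x0}. prox_regular_at f y"
  shows "\<exists>abar\<ge>0. \<forall>a\<ge>abar. \<forall>x y. y \<in> {z. f z \<le> f x0} \<longrightarrow>
           (\<exists>e>0. convex_on (ball y e) (\<lambda>z. f z + a / 2 * (norm (z - x))\<^sup>2))"
proof -
  have "compact {x. f x \<le> f x0}"
    using assms(3) closed_Collect_le[OF continuous_on_if_locally_lipschitz[OF assms(1)] continuous_on_const]
    by (simp add: compact_eq_bounded_closed)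
  moreover have "\<exists>\<delta>>0. \<exists>A. lower_quadratic_support_on (ball y \<delta>) A f" if y: "y \<in> {x. f x \<le> f x0}" for y
  proof -
    obtain e L where "e > 0" and lip: "L-lipschitz_on (ball y e) f"
      using assms(1) unfolding locally_lipschitz_def by blast
    then show ?thesis
      using prox_regular_at_imp_lower_quadratic_support[OF lip open_ball] assms(4) y by simp
  qed
  ultimately obtain A where A: "\<forall>y\<in>{x. f x \<le> f x0}. \<exists>\<delta>>0. lower_quadratic_support_on (ball y \<delta>) A f"
    using compact_imp_uniform_lower_quadratic_support by blast
  show ?thesis
  proof (rule exI[of _ "max 0 A"], intro conjI allI impI)
    fix a x y assume "max 0 A \<le> a" "y \<in> {z. f z \<le> f x0}"
    then obtain \<delta> where "\<delta> > 0" and support: "lower_quadratic_support_on (ball y \<delta>) A f"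
      using A by blast
    have "convex_on (ball y \<delta>) (\<lambda>z. f z + a / 2 * (norm (z - x))\<^sup>2)"
      by (rule convex_on_add_quadratic_if_lower_quadratic_support[OF convex_ball support])
        (use \<open>max 0 A \<le> a\<close> in simp)
    then show "\<exists>e>0. convex_on (ball y e) (\<lambda>z. f z + a / 2 * (norm (z - x))\<^sup>2)"
      using \<open>\<delta> > 0\<close> by blast
  qed simp
qed

end
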